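(* Let $X$ be a countably compact space satisfying $\mathsf{IC}$. Then $\mathsf{EC}(X,Y)$ holds for every C-closed isocompact space $Y$ with $G_\delta$ points.
   Context: All spaces are Hausdorff and maps continuous. $X$ satisfies $\mathsf{IC}$ if of any two disjoint closed subsets of $X$ at least one is Lindelöf. A space is C-closed if every countably compact subspace is closed, and isocompact if every closed countably compact subset is compact. For a non-Lindelöf space $X$, $\mathsf{EC}(X,Y)$ means: for every continuous $f:X\to Y$ there is a Lindelöf $Z\subset X$ with $f(X\setminus Z)$ a singleton (for Lindelöf $X$ regarded as trivially true). *)

theory Defs
  imports "HOL-Analysis.Analysis"
begin

definition countably_compactin :: "'a topology \<Rightarrow> 'a set \<Rightarrow> bool" where
  "countably_compactin X S \<longleftrightarrow> S \<subseteq> topspace X \<and>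
     (\<forall>\<U>. countable \<U> \<and> (\<forall>U\<in>\<U>. openin X U) \<and> S \<subseteq> \<Union>\<U>
        \<longrightarrow> (\<exists>\<F>. finite \<F> \<and> \<F> \<subseteq> \<U> \<and> S \<subseteq> \<Union>\<F>))"

definition countably_compact_space :: "'a topology \<Rightarrow> bool" where
  "countably_compact_space X \<longleftrightarrow> countably_compactin X (topspace X)"

definition Lindelofin :: "'a topology \<Rightarrow> 'a set \<Rightarrow> bool" where
  "Lindelofin X S \<longleftrightarrow> S \<subseteq> topspace X \<and> Lindelof_space (subtopology X S)"

definition IC :: "'a topology \<Rightarrow> bool" where
  "IC X \<longleftrightarrow> (\<forall>A B. closedin X A \<and> closedin X B \<and> A \<inter> B = {}
      \<longrightarrow> Lindelofin X A \<or> Lindelofin X B)"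

definition C_closed :: "'a topology \<Rightarrow> bool" where
  "C_closed Y \<longleftrightarrow> (\<forall>S. countably_compactin Y S \<longrightarrow> closedin Y S)"

definition isocompact :: "'a topology \<Rightarrow> bool" where
  "isocompact Y \<longleftrightarrow> (\<forall>S. closedin Y S \<and> countably_compactin Y S \<longrightarrow> compactin Y S)"

definition G_delta_points :: "'a topology \<Rightarrow> bool" where
  "G_delta_points Y \<longleftrightarrow> (\<forall>y\<in>topspace Y. gdelta_in Y {y})"

definition EC :: "'a topology \<Rightarrow> 'b topology \<Rightarrow> bool" where
  "EC X Y \<longleftrightarrow> Lindelof_space X \<or>
     (\<forall>f. continuous_map X Y f \<longrightarrow>
        (\<exists>Z. Lindelofin X Z \<and> (\<exists>y. f ` (topspace X - Z) = {y})))"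

end

theory Submission
  imports Defs
begin

text \<open>The image \<open>T = f(X)\<close> is countably compact, hence closed and then compact in \<open>Y\<close>.
  Call \<open>p \<in> T\<close> good if some closed neighbourhood of \<open>p\<close> has Lindelof preimage. Compactness
  of \<open>T\<close> shows that a closed set meeting \<open>T\<close> only in good points has Lindelof preimage; so,
  if \<open>X\<close> is not Lindelof, some \<open>y \<in> T\<close> is bad. Two distinct bad points would have disjoint
  closed neighbourhoods in the compact Hausdorff set \<open>T\<close>, whose preimages are disjoint closed
  non-Lindelof sets, contradicting IC. Finally, if \<open>{y} = \<Inter>\<^sub>n U\<^sub>n\<close> with \<open>U\<^sub>n\<close> open,
  then \<open>X - f\<^sup>-\<^sup>1(y)\<close> is the countable union of the Lindelof sets \<open>f\<^sup>-\<^sup>1(Y - U\<^sub>n)\<close>.\<close>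

lemma Lindelofin_closedin_subset:
  assumes "closedin X S" "S \<subseteq> C" "Lindelofin X C"
  shows "Lindelofin X S"
proof -
  have "closedin (subtopology X C) S"
    using assms(1,2) by (simp add: closedin_subset_topspace)
  then have "Lindelof_space (subtopology (subtopology X C) S)"
    using assms(3) Lindelof_space_closedin_subtopology unfolding Lindelofin_def by blast
  then show ?thesis
    using assms(1,2) by (simp add: Lindelofin_def subtopology_subtopology inf.absorb2 closedin_subset)
qed

lemma Lindelofin_countable_Union:
  assumes "countable \<U>" "\<And>U. U \<in> \<U> \<Longrightarrow> Lindelofin X U"
  shows "Lindelofin X (\<Union>\<U>)"
  using assms Lindelof_space_Union[of \<U> X] unfolding Lindelofin_def by blast

lemma countably_compactin_continuous_map_image:
  assumes X: "countably_compact_space X" and f: "continuous_map X Y f"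
  shows "countably_compactin Y (f ` topspace X)"
  unfolding countably_compactin_def
proof (intro conjI allI impI)
  show "f ` topspace X \<subseteq> topspace Y"
    using continuous_map_image_subset_topspace[OF f] .
next
  fix \<U> assume \<U>: "countable \<U> \<and> (\<forall>U\<in>\<U>. openin Y U) \<and> f ` topspace X \<subseteq> \<Union>\<U>"
  define preim where "preim U = {x \<in> topspace X. f x \<in> U}" for U
  have "countable (preim ` \<U>)"
    using \<U> by simp
  moreover have "\<forall>V\<in>preim ` \<U>. openin X V"
    using \<U> openin_continuous_map_preimage[OF f] unfolding preim_def by blast
  moreover have "topspace X \<subseteq> \<Union>(preim ` \<U>)"
    using \<U> unfolding preim_def by blast
  ultimately have "\<exists>\<F>. finite \<F> \<and> \<F> \<subseteq> preim ` \<U> \<and> topspace X \<subseteq> \<Union>\<F>"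
    using X unfolding countably_compact_space_def countably_compactin_def by simp
  then obtain \<F> where "finite \<F>" "\<F> \<subseteq> preim ` \<U>" "topspace X \<subseteq> \<Union>\<F>"
    by blast
  then obtain \<G> where "\<G> \<subseteq> \<U>" "finite \<G>" "topspace X \<subseteq> \<Union>(preim ` \<G>)"
    by (metis finite_subset_image)
  moreover have "f ` topspace X \<subseteq> \<Union>\<G>"
    using \<open>topspace X \<subseteq> \<Union>(preim ` \<G>)\<close> unfolding preim_def by blast
  ultimately show "\<exists>\<F>. finite \<F> \<and> \<F> \<subseteq> \<U> \<and> f ` topspace X \<subseteq> \<Union>\<F>"
    by blast
qed

lemma compactin_continuous_map_image_isocompact:
  assumes "countably_compact_space X" "continuous_map X Y f" "C_closed Y" "isocompact Y"
  shows "compactin Y (f ` topspace X)"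
  using countably_compactin_continuous_map_image[OF assms(1,2)] assms(3,4)
  by (simp add: C_closed_def isocompact_def)

lemma Hausdorff_space_compactin_closed_nbhd:
  assumes "Hausdorff_space Y" "compactin Y T" "p \<in> T" "openin Y V" "p \<in> V"
  obtains N where "closedin Y N" "p \<in> Y interior_of N" "N \<inter> T \<subseteq> V"
proof -
  have "T - V = T \<inter> (topspace Y - V)"
    using compactin_subset_topspace[OF assms(2)] by blast
  then have "compactin Y (T - V)"
    using compact_Int_closedin[OF assms(2)] assms(4) by (simp add: closedin_diff)
  moreover have "compactin Y {p}"
    using assms(2,3) compactin_subset_topspace by auto
  moreover have "disjnt {p} (T - V)"
    using assms(5) by (simp add: disjnt_def)
  ultimately obtain U W where "openin Y U" "openin Y W" "p \<in> U" "T - V \<subseteq> W" "disjnt U W"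
    using Hausdorff_space_compact_separation[OF assms(1)] by (metis insert_subset)
  moreover have "U \<subseteq> Y interior_of (topspace Y - W)"
    using \<open>disjnt U W\<close> \<open>openin Y U\<close> openin_subset[OF \<open>openin Y U\<close>]
    by (intro interior_of_maximal) (auto simp: disjnt_def)
  ultimately show ?thesis
    using that[of "topspace Y - W"] by blast
qed

definition Lindelof_preimage_nbhd :: "'a topology \<Rightarrow> 'b topology \<Rightarrow> ('a \<Rightarrow> 'b) \<Rightarrow> 'b \<Rightarrow> bool" where
  "Lindelof_preimage_nbhd X Y f p \<longleftrightarrow>
     (\<exists>N. closedin Y N \<and> p \<in> Y interior_of N \<and> Lindelofin X {x \<in> topspace X. f x \<in> N})"

lemma Lindelofin_preimage_closedin:
  assumes f: "continuous_map X Y f" and T: "compactin Y (f ` topspace X)"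
    and K: "closedin Y K" "\<And>p. p \<in> K \<inter> f ` topspace X \<Longrightarrow> Lindelof_preimage_nbhd X Y f p"
  shows "Lindelofin X {x \<in> topspace X. f x \<in> K}"
proof -
  let ?T = "f ` topspace X"
  have "\<forall>p \<in> K \<inter> ?T. \<exists>N. closedin Y N \<and> p \<in> Y interior_of N \<and> Lindelofin X {x \<in> topspace X. f x \<in> N}"
    using K(2) unfolding Lindelof_preimage_nbhd_def by simp
  then obtain N where N: "\<forall>p \<in> K \<inter> ?T. closedin Y (N p) \<and> p \<in> Y interior_of N p \<and>
      Lindelofin X {x \<in> topspace X. f x \<in> N p}"
    by (rule bchoice[elim_format]) auto
  have "compactin Y (K \<inter> ?T)"
    using compact_Int_closedin[OF T K(1)] by (simp add: Int_commute)
  then have "\<exists>\<F>. finite \<F> \<and> \<F> \<subseteq> (\<lambda>p. Y interior_of N p) ` (K \<inter> ?T) \<and> K \<inter> ?T \<subseteq> \<Union>\<F>"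
    using N by (intro compactinD) auto
  then obtain P where P: "finite P" "P \<subseteq> K \<inter> ?T" "K \<inter> ?T \<subseteq> (\<Union>p \<in> P. Y interior_of N p)"
    by (metis finite_subset_image)
  have "Lindelofin X (\<Union>p\<in>P. {x \<in> topspace X. f x \<in> N p})"
    using P(1,2) N by (intro Lindelofin_countable_Union) (auto intro: countable_finite simp: subset_iff)
  moreover have "{x \<in> topspace X. f x \<in> K} \<subseteq> (\<Union>p\<in>P. {x \<in> topspace X. f x \<in> N p})"
  proof
    fix x assume x: "x \<in> {x \<in> topspace X. f x \<in> K}"
    then have "f x \<in> K \<inter> ?T"
      by blast
    then obtain p where "p \<in> P" "f x \<in> Y interior_of N p"
      using P(3) by blast
    then show "x \<in> (\<Union>p\<in>P. {x \<in> topspace X. f x \<in> N p})"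
      using interior_of_subset[of Y "N p"] x by blast
  qed
  moreover have "closedin X {x \<in> topspace X. f x \<in> K}"
    using closedin_continuous_map_preimage[OF f K(1)] .
  ultimately show ?thesis
    using Lindelofin_closedin_subset by blast
qed

lemma Lindelof_space_if_Lindelof_preimage_nbhds:
  assumes "continuous_map X Y f" "compactin Y (f ` topspace X)"
    and "\<And>p. p \<in> f ` topspace X \<Longrightarrow> Lindelof_preimage_nbhd X Y f p"
  shows "Lindelof_space X"
proof -
  have "{x \<in> topspace X. f x \<in> topspace Y} = topspace X"
    using continuous_map_image_subset_topspace[OF assms(1)] by blast
  then show ?thesis
    using Lindelofin_preimage_closedin[OF assms(1,2), of "topspace Y"] assms(3)
    by (simp add: Lindelofin_def)
qed

lemma IC_not_Lindelof_preimage_nbhd_unique: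
  assumes "IC X" "Hausdorff_space Y"
    and f: "continuous_map X Y f" and T: "compactin Y (f ` topspace X)"
    and p: "p \<in> f ` topspace X" "\<not> Lindelof_preimage_nbhd X Y f p"
    and q: "q \<in> f ` topspace X" "\<not> Lindelof_preimage_nbhd X Y f q"
  shows "p = q"
proof (rule ccontr)
  assume "p \<noteq> q"
  moreover have "p \<in> topspace Y" "q \<in> topspace Y"
    using p(1) q(1) continuous_map_image_subset_topspace[OF f] by blast+
  ultimately obtain Vp Vq where V: "openin Y Vp" "openin Y Vq" "p \<in> Vp" "q \<in> Vq" "disjnt Vp Vq"
    using assms(2) unfolding Hausdorff_space_def by metis
  obtain Np where Np: "closedin Y Np" "p \<in> Y interior_of Np" "Np \<inter> f ` topspace X \<subseteq> Vp"
    using Hausdorff_space_compactin_closed_nbhd[OF assms(2) T p(1) V(1,3)] .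
  obtain Nq where Nq: "closedin Y Nq" "q \<in> Y interior_of Nq" "Nq \<inter> f ` topspace X \<subseteq> Vq"
    using Hausdorff_space_compactin_closed_nbhd[OF assms(2) T q(1) V(2,4)] .
  have "closedin X {x \<in> topspace X. f x \<in> Np}" "closedin X {x \<in> topspace X. f x \<in> Nq}"
    using closedin_continuous_map_preimage[OF f] Np(1) Nq(1) by auto
  moreover have "{x \<in> topspace X. f x \<in> Np} \<inter> {x \<in> topspace X. f x \<in> Nq} = {}"
    using Np(3) Nq(3) V(5) by (auto simp: disjnt_def)
  ultimately have "Lindelofin X {x \<in> topspace X. f x \<in> Np} \<or> Lindelofin X {x \<in> topspace X. f x \<in> Nq}"
    using assms(1) unfolding IC_def by blast
  then show False
    using p(2) q(2) Np(1,2) Nq(1,2) unfolding Lindelof_preimage_nbhd_def by blast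
qed

lemma Lindelofin_complement_fibre:
  assumes f: "continuous_map X Y f" and T: "compactin Y (f ` topspace X)" and "gdelta_in Y {y}"
    and nbhd: "\<And>p. p \<in> f ` topspace X - {y} \<Longrightarrow> Lindelof_preimage_nbhd X Y f p"
  shows "Lindelofin X (topspace X - {x \<in> topspace X. f x = y})"
proof -
  obtain \<U> where \<U>: "countable \<U>" "\<And>U. U \<in> \<U> \<Longrightarrow> openin Y U" "\<Inter>\<U> = {y}"
    using assms(3) unfolding gdelta_in_alt intersection_of_def by blast
  have "topspace X - {x \<in> topspace X. f x = y} = (\<Union>U\<in>\<U>. {x \<in> topspace X. f x \<in> topspace Y - U})"
    using \<U>(3) continuous_map_image_subset_topspace[OF f] by blast
  moreover have "Lindelofin X {x \<in> topspace X. f x \<in> topspace Y - U}" if "U \<in> \<U>" for U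
    using that \<U> by (intro Lindelofin_preimage_closedin[OF f T] nbhd) auto
  ultimately show ?thesis
    using \<U>(1) by (auto intro: Lindelofin_countable_Union)
qed

theorem corollary3p10:
  fixes X :: "'a topology" and Y :: "'b topology"
  assumes "Hausdorff_space X" "countably_compact_space X" "IC X"
    and "Hausdorff_space Y" "C_closed Y" "isocompact Y" "G_delta_points Y"
  shows "EC X Y"
proof (cases "Lindelof_space X")
  case False
  have "\<exists>Z. Lindelofin X Z \<and> (\<exists>y. f ` (topspace X - Z) = {y})" if f: "continuous_map X Y f" for f
  proof -
    have T: "compactin Y (f ` topspace X)"
      using compactin_continuous_map_image_isocompact[OF assms(2) f assms(5,6)] .
    then obtain y where y: "y \<in> f ` topspace X" "\<not> Lindelof_preimage_nbhd X Y f y"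
      using Lindelof_space_if_Lindelof_preimage_nbhds[OF f] False by blast
    then have "gdelta_in Y {y}"
      using assms(7) continuous_map_image_subset_topspace[OF f] by (auto simp: G_delta_points_def)
    then have "Lindelofin X (topspace X - {x \<in> topspace X. f x = y})"
      using Lindelofin_complement_fibre[OF f T] IC_not_Lindelof_preimage_nbhd_unique[OF assms(3,4) f T _ _ y]
      by blast
    moreover have "f ` (topspace X - (topspace X - {x \<in> topspace X. f x = y})) = {y}"
      using y(1) by auto
    ultimately show ?thesis by blast
  qed
  then show ?thesis by (simp add: EC_def)
qed (simp add: EC_def)

end
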